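(* Let $\rho_0,\rho_1,\dots,\rho_n$ be density matrices on a finite-dimensional complex Hilbert space with $\rho_j\rho_k=0$ for all $j\ne k$ in $\{0,1,\dots,n\}$. Let $p_1,\dots,p_n\ge0$ with $\sum_{j=1}^n p_j=1$, let $\epsilon\in[0,1]$, and set $\sigma_j=\epsilon\rho_0+(1-\epsilon)\rho_j$ for $j=1,\dots,n$, $\rho=\sum_{j=1}^n p_j\rho_j$ and $\sigma=\sum_{j=1}^n p_j\sigma_j=\epsilon\rho_0+(1-\epsilon)\rho$. Then for each $\mathcal{F}\in\{\mathcal{F}_1,\mathcal{F}_Q,\mathcal{F}_A\}$, $$\sum_{j=1}^n p_j\,\mathcal{F}(\rho_j,\sigma_j)=\mathcal{F}(\rho,\sigma)=1-\epsilon.$$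
   Context: A density matrix is a positive semidefinite operator of unit trace; $\sqrt{\cdot}$ is the positive semidefinite square root. $\mathcal{F}_1(\rho,\sigma)=(\operatorname{tr}\sqrt{\sqrt{\rho}\sigma\sqrt{\rho}})^2$ (Uhlmann–Jozsa fidelity); $\mathcal{F}_Q(\rho,\sigma)=\min_{0\le s\le1}\operatorname{tr}(\rho^s\sigma^{1-s})$, with powers defined by spectral calculus on the support (so $\rho^0$ is the projector onto the support of $\rho$); $\mathcal{F}_A(\rho,\sigma)=[\operatorname{tr}(\sqrt{\rho}\sqrt{\sigma})]^2$ ($A$-fidelity). *)

theory Defs
  imports Complex_Main "Jordan_Normal_Form.Matrix"
begin

definition adj :: "complex mat \<Rightarrow> complex mat" where
  "adj A = mat (dim_col A) (dim_row A) (\<lambda>(i,j). cnj (A $$ (j,i)))"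

definition tr :: "complex mat \<Rightarrow> complex" where
  "tr A = (\<Sum>i<dim_row A. A $$ (i,i))"

definition psd :: "nat \<Rightarrow> complex mat \<Rightarrow> bool" where
  "psd d A \<longleftrightarrow> A \<in> carrier_mat d d \<and> adj A = A \<and>
     (\<forall>v \<in> carrier_vec d. 0 \<le> Re (\<Sum>i<d. cnj (v $ i) * (A *\<^sub>v v) $ i))"

definition density :: "nat \<Rightarrow> complex mat \<Rightarrow> bool" where
  "density d A \<longleftrightarrow> psd d A \<and> tr A = 1"

definition unitary :: "nat \<Rightarrow> complex mat \<Rightarrow> bool" where
  "unitary d U \<longleftrightarrow> U \<in> carrier_mat d d \<and> adj U * U = 1\<^sub>m d"

definition rdiag :: "nat \<Rightarrow> (nat \<Rightarrow> real) \<Rightarrow> complex mat" where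
  "rdiag d f = mat d d (\<lambda>(i,j). if i = j then complex_of_real (f i) else 0)"

definition psd_sqrt :: "complex mat \<Rightarrow> complex mat" where
  "psd_sqrt A = (THE B. psd (dim_row A) B \<and> B * B = A)"

text \<open>Real power by spectral calculus on the support: eigenvalue 0 is sent to 0
  (note that in Isabelle 0 powr s = 0 for every s, while x powr 0 = 1 for x > 0),
  so mat_powr A 0 is the projector onto the support of A.\<close>
definition mat_powr :: "complex mat \<Rightarrow> real \<Rightarrow> complex mat" where
  "mat_powr A s = (THE B. \<exists>U (l :: nat \<Rightarrow> real). unitary (dim_row A) U \<and>
      A = U * rdiag (dim_row A) l * adj U \<and>
      B = U * rdiag (dim_row A) (\<lambda>i. l i powr s) * adj U)"

definition fid1 :: "complex mat \<Rightarrow> complex mat \<Rightarrow> real" where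
  "fid1 \<rho> \<sigma> = (Re (tr (psd_sqrt (psd_sqrt \<rho> * \<sigma> * psd_sqrt \<rho>)))) ^ 2"

definition fidQ :: "complex mat \<Rightarrow> complex mat \<Rightarrow> real" where
  "fidQ \<rho> \<sigma> = Inf ((\<lambda>s. Re (tr (mat_powr \<rho> s * mat_powr \<sigma> (1 - s)))) ` {0..1})"

definition fidA :: "complex mat \<Rightarrow> complex mat \<Rightarrow> real" where
  "fidA \<rho> \<sigma> = (Re (tr (psd_sqrt \<rho> * psd_sqrt \<sigma>))) ^ 2"

definition wsum :: "nat \<Rightarrow> (nat \<Rightarrow> real) \<Rightarrow> (nat \<Rightarrow> complex mat) \<Rightarrow> nat set \<Rightarrow> complex mat" where
  "wsum d p A J = mat d d (\<lambda>(i,k). \<Sum>j\<in>J. complex_of_real (p j) * A j $$ (i,k))"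

end

theory Submission
  imports Defs "Jordan_Normal_Form.Schur_Decomposition"
begin

text \<open>If \<open>\<tau> \<rho> = 0\<close>, the states \<open>\<rho>\<close> and \<open>\<tau>\<close> live on orthogonal subspaces, and every
  fidelity between \<open>\<rho>\<close> and \<open>\<sigma> = \<epsilon> \<tau> + (1 - \<epsilon>) \<rho>\<close> only sees the part \<open>(1 - \<epsilon>) \<rho>\<close> of \<open>\<sigma>\<close>:
  \<open>\<surd>\<rho> \<sigma> \<surd>\<rho> = (1 - \<epsilon>) \<rho>\<^sup>2\<close>, \<open>\<surd>\<sigma> = \<surd>\<epsilon> \<surd>\<tau> + \<surd>(1 - \<epsilon>) \<surd>\<rho>\<close> and
  \<open>\<sigma>\<^bsup>1-s\<^esup> \<rho>\<^bsup>s\<^esup> = (1 - \<epsilon>)\<^bsup>1-s\<^esup> \<rho>\<close>. Hence all three fidelities equal \<open>1 - \<epsilon>\<close>.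
  The mixture \<open>\<Sum>\<^sub>j p\<^sub>j \<rho>\<^sub>j\<close> is again a state orthogonal to \<open>\<rho>\<^sub>0\<close>, and its partner
  \<open>\<Sum>\<^sub>j p\<^sub>j \<sigma>\<^sub>j\<close> is \<open>\<epsilon> \<rho>\<^sub>0\<close> plus \<open>1 - \<epsilon>\<close> times it, so the same identity applies to it
  and to every pair \<open>(\<rho>\<^sub>j, \<sigma>\<^sub>j)\<close>; the weights sum to one.
  Square roots and powers are handled through the spectral theorem for Hermitian matrices,
  proved by deflation along a unit eigenvector.\<close>

text \<open>Associativity is used only in instances with explicit dimensions: as a simp rule with
  dimensions left to be guessed, it makes the simplifier loop together with
  \<open>mult_carrier_mat_square\<close>.\<close>
declare assoc_mult_mat[simp del]

abbreviation spectral_mat :: "nat \<Rightarrow> complex mat \<Rightarrow> (nat \<Rightarrow> real) \<Rightarrow> complex mat" where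
  "spectral_mat n U l \<equiv> U * rdiag n l * adj U"

definition cinner :: "nat \<Rightarrow> complex vec \<Rightarrow> complex vec \<Rightarrow> complex" where
  "cinner n v w = (\<Sum>i<n. cnj (v $ i) * w $ i)"

lemma adj_dim[simp]: "dim_row (adj A) = dim_col A" "dim_col (adj A) = dim_row A"
  by (auto simp: adj_def)

lemma adj_carrier_mat[simp]: "A \<in> carrier_mat n m \<Longrightarrow> adj A \<in> carrier_mat m n"
  by (auto simp: adj_def)

lemma index_adj[simp]: "i < dim_col A \<Longrightarrow> j < dim_row A \<Longrightarrow> adj A $$ (i,j) = cnj (A $$ (j,i))"
  by (simp add: adj_def)

lemma adj_adj[simp]: "adj (adj A) = A"
  by (rule eq_matI) auto

lemma adj_zero[simp]: "adj (0\<^sub>m n m) = 0\<^sub>m m n"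
  by (rule eq_matI) auto

lemma adj_one[simp]: "adj (1\<^sub>m n) = 1\<^sub>m n"
  by (rule eq_matI) auto

lemma adj_mult: "A \<in> carrier_mat n m \<Longrightarrow> B \<in> carrier_mat m k \<Longrightarrow> adj (A * B) = adj B * adj A"
  by (rule eq_matI) (auto simp: scalar_prod_def cnj_sum mult.commute intro!: sum.cong)

lemma adj_add: "A \<in> carrier_mat n m \<Longrightarrow> B \<in> carrier_mat n m \<Longrightarrow> adj (A + B) = adj A + adj B"
  by (rule eq_matI) auto

lemma adj_smult: "adj (c \<cdot>\<^sub>m A) = cnj c \<cdot>\<^sub>m adj A"
  by (rule eq_matI) auto

lemma smult_smult_mat: "a \<cdot>\<^sub>m (b \<cdot>\<^sub>m A) = (a * b) \<cdot>\<^sub>m (A :: complex mat)"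
  by (rule eq_matI) auto

lemma index_adj_mult: "A \<in> carrier_mat m n \<Longrightarrow> B \<in> carrier_mat m k \<Longrightarrow> j < n \<Longrightarrow> l < k \<Longrightarrow>
    (adj A * B) $$ (j,l) = (\<Sum>i<m. cnj (A $$ (i,j)) * B $$ (i,l))"
  by (simp add: scalar_prod_def atLeast0LessThan)

lemma adj_mult_self_eq_zero:
  assumes A: "A \<in> carrier_mat n m" and z: "adj A * A = 0\<^sub>m m m"
  shows "A = 0\<^sub>m n m"
proof (rule eq_matI)
  fix i j assume "i < dim_row (0\<^sub>m n m)" "j < dim_col (0\<^sub>m n m)"
  hence i: "i < n" and j: "j < m" by auto
  have "complex_of_real (\<Sum>k<n. (cmod (A $$ (k,j)))\<^sup>2) = (adj A * A) $$ (j,j)"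
    unfolding index_adj_mult[OF A A j j] of_real_sum
    by (rule sum.cong) (auto simp: complex_norm_square mult.commute simp del: of_real_power)
  also have "\<dots> = 0" using z j by simp
  finally have "(\<Sum>k<n. (cmod (A $$ (k,j)))\<^sup>2) = 0" by (simp only: of_real_eq_0_iff)
  hence "\<forall>k\<in>{..<n}. (cmod (A $$ (k,j)))\<^sup>2 = 0" by (subst (asm) sum_nonneg_eq_0_iff) auto
  thus "A $$ (i,j) = 0\<^sub>m n m $$ (i,j)" using i j by simp
qed (use A in auto)

lemma mult_carrier_mat_square[simp]:
  "A \<in> carrier_mat n n \<Longrightarrow> B \<in> carrier_mat n n \<Longrightarrow> A * B \<in> carrier_mat n n"
  by auto

lemma rdiag_carrier_mat[simp]: "rdiag n f \<in> carrier_mat n n"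
  by (simp add: rdiag_def)

lemma rdiag_dim[simp]: "dim_row (rdiag n f) = n" "dim_col (rdiag n f) = n"
  by (simp_all add: rdiag_def)

lemma index_rdiag[simp]: "i < n \<Longrightarrow> j < n \<Longrightarrow> rdiag n f $$ (i,j) = (if i = j then complex_of_real (f i) else 0)"
  by (simp add: rdiag_def)

lemma adj_rdiag[simp]: "adj (rdiag n f) = rdiag n f"
  by (rule eq_matI) auto

lemma rdiag_cong: "(\<And>i. i < n \<Longrightarrow> f i = g i) \<Longrightarrow> rdiag n f = rdiag n g"
  by (rule eq_matI) auto

lemma smult_rdiag: "complex_of_real c \<cdot>\<^sub>m rdiag n f = rdiag n (\<lambda>i. c * f i)"
  by (rule eq_matI) auto

lemma index_mult_rdiag[simp]:
  assumes "A \<in> carrier_mat m n" "i < m" "j < n"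
  shows "(A * rdiag n f) $$ (i,j) = A $$ (i,j) * complex_of_real (f j)"
proof -
  have "(A * rdiag n f) $$ (i,j) = (\<Sum>k<n. A $$ (i,k) * (if k = j then complex_of_real (f k) else 0))"
    using assms by (auto simp: scalar_prod_def atLeast0LessThan intro!: sum.cong)
  also have "\<dots> = (\<Sum>k<n. if k = j then A $$ (i,k) * complex_of_real (f k) else 0)"
    by (rule sum.cong) auto
  finally show ?thesis using assms by simp
qed

lemma index_rdiag_mult[simp]:
  assumes "A \<in> carrier_mat n m" "i < n" "j < m"
  shows "(rdiag n f * A) $$ (i,j) = complex_of_real (f i) * A $$ (i,j)"
proof -
  have "(rdiag n f * A) $$ (i,j) = (\<Sum>k<n. (if i = k then complex_of_real (f i) else 0) * A $$ (k,j))"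
    using assms by (auto simp: scalar_prod_def atLeast0LessThan intro!: sum.cong)
  also have "\<dots> = (\<Sum>k<n. if i = k then complex_of_real (f i) * A $$ (k,j) else 0)"
    by (rule sum.cong) auto
  finally show ?thesis using assms by simp
qed

lemma rdiag_mult_rdiag: "rdiag n f * rdiag n g = rdiag n (\<lambda>i. f i * g i)"
  by (rule eq_matI) (auto simp: index_mult_rdiag[OF rdiag_carrier_mat] simp del: index_mult_mat(1))

lemma rdiag_mult_vec: "v \<in> carrier_vec n \<Longrightarrow> rdiag n f *\<^sub>v v = vec n (\<lambda>i. complex_of_real (f i) * v $ i)"
  by (rule eq_vecI)
     (auto simp: scalar_prod_def atLeast0LessThan if_distrib if_distribR cong: if_cong)

lemma tr_mult_commute:
  assumes "A \<in> carrier_mat n m" "B \<in> carrier_mat m n"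
  shows "tr (A * B) = tr (B * A)"
proof -
  have "tr (A * B) = (\<Sum>i<n. \<Sum>k<m. A $$ (i,k) * B $$ (k,i))"
    using assms by (simp add: tr_def scalar_prod_def atLeast0LessThan)
  also have "\<dots> = (\<Sum>k<m. \<Sum>i<n. B $$ (k,i) * A $$ (i,k))"
    by (subst sum.swap) (simp add: mult.commute)
  also have "\<dots> = tr (B * A)"
    using assms by (simp add: tr_def scalar_prod_def atLeast0LessThan)
  finally show ?thesis .
qed

lemma tr_add: "A \<in> carrier_mat n n \<Longrightarrow> B \<in> carrier_mat n n \<Longrightarrow> tr (A + B) = tr A + tr B"
  by (simp add: tr_def sum.distrib)

lemma tr_smult: "A \<in> carrier_mat n n \<Longrightarrow> tr (c \<cdot>\<^sub>m A) = c * tr A"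
  by (simp add: tr_def sum_distrib_left)

lemma cinner_self: "cinner n v v = complex_of_real (\<Sum>i<n. (cmod (v $ i))\<^sup>2)"
  unfolding cinner_def of_real_sum
  by (rule sum.cong) (auto simp: complex_norm_square mult.commute simp del: of_real_power)

lemma cinner_mult_mat_vec:
  assumes M: "M \<in> carrier_mat n n" and v: "v \<in> carrier_vec n" and w: "w \<in> carrier_vec n"
  shows "cinner n v (M *\<^sub>v w) = cinner n (adj M *\<^sub>v v) w"
proof -
  have "cinner n v (M *\<^sub>v w) = (\<Sum>i<n. \<Sum>k<n. cnj (v $ i) * M $$ (i,k) * w $ k)"
    using assms by (simp add: cinner_def scalar_prod_def atLeast0LessThan sum_distrib_left mult.assoc)
  also have "\<dots> = (\<Sum>k<n. \<Sum>i<n. cnj (v $ i) * M $$ (i,k) * w $ k)"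
    by (rule sum.swap)
  also have "\<dots> = cinner n (adj M *\<^sub>v v) w"
    using assms by (simp add: cinner_def scalar_prod_def atLeast0LessThan sum_distrib_left sum_distrib_right mult_ac)
  finally show ?thesis .
qed

lemma unitary_carrier_mat: "unitary n U \<Longrightarrow> U \<in> carrier_mat n n"
  by (simp add: unitary_def)

lemma unitary_adj_mult: "unitary n U \<Longrightarrow> adj U * U = 1\<^sub>m n"
  by (simp add: unitary_def)

lemma unitary_mult_adj: "unitary n U \<Longrightarrow> U * adj U = 1\<^sub>m n"
  using mat_mult_left_right_inverse[of "adj U" n U] by (auto simp: unitary_def)

lemma unitary_mult:
  assumes U: "unitary n U" and V: "unitary n V"
  shows "unitary n (U * V)"
proof -
  have Uc: "U \<in> carrier_mat n n" and Vc: "V \<in> carrier_mat n n"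
    using U V unitary_carrier_mat by auto
  have "adj (U * V) * (U * V) = adj V * (adj U * U) * V"
    using Uc Vc by (simp add: adj_mult[OF Uc Vc] assoc_mult_mat[of _ n n _ n _ n])
  also have "\<dots> = 1\<^sub>m n" using unitary_adj_mult[OF U] unitary_adj_mult[OF V] Vc by simp
  finally show ?thesis using Uc Vc by (simp add: unitary_def)
qed

lemma spectral_mat_mult_spectral_mat:
  assumes U: "unitary n U"
  shows "spectral_mat n U f * spectral_mat n U g = spectral_mat n U (\<lambda>i. f i * g i)"
proof -
  have Uc: "U \<in> carrier_mat n n" using U unitary_carrier_mat by auto
  have "spectral_mat n U f * spectral_mat n U g = U * rdiag n f * (adj U * U) * rdiag n g * adj U"
    using Uc by (simp add: assoc_mult_mat[of _ n n _ n _ n])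
  also have "\<dots> = U * (rdiag n f * rdiag n g) * adj U"
    using Uc unitary_adj_mult[OF U] by (simp add: assoc_mult_mat[of _ n n _ n _ n])
  finally show ?thesis by (simp add: rdiag_mult_rdiag)
qed

section \<open>The spectral theorem for Hermitian matrices\<close>

lemma adj_four_block_mat:
  assumes "B \<in> carrier_mat (dim_row A) (dim_col D)" "C \<in> carrier_mat (dim_row D) (dim_col A)"
  shows "adj (four_block_mat A B C D) = four_block_mat (adj A) (adj C) (adj B) (adj D)"
  by (rule eq_matI) (use assms in auto)

lemma rdiag_four_block_mat:
  "rdiag (1 + n) (\<lambda>i. if i = 0 then r else f (i - 1)) =
     four_block_mat (rdiag 1 (\<lambda>_. r)) (0\<^sub>m 1 n) (0\<^sub>m n 1) (rdiag n f)"
  by (rule eq_matI) auto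

lemma unitary_four_block_mat:
  assumes U: "unitary n U"
  shows "unitary (1 + n) (four_block_mat (1\<^sub>m 1) (0\<^sub>m 1 n) (0\<^sub>m n 1) U)"
proof -
  have Uc: "U \<in> carrier_mat n n" using U unitary_carrier_mat by auto
  have "adj (four_block_mat (1\<^sub>m 1) (0\<^sub>m 1 n) (0\<^sub>m n 1) U) * four_block_mat (1\<^sub>m 1) (0\<^sub>m 1 n) (0\<^sub>m n 1) U
      = four_block_mat (1\<^sub>m 1) (0\<^sub>m 1 n) (0\<^sub>m n 1) (adj U * U)"
    using Uc by (simp add: adj_four_block_mat mult_four_block_mat[of _ 1 1 _ n _ n _ _ 1 _ n])
  moreover have "four_block_mat (1\<^sub>m 1) (0\<^sub>m 1 n) (0\<^sub>m n 1) U \<in> carrier_mat (1 + n) (1 + n)"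
    using Uc by (intro four_block_carrier_mat) auto
  ultimately show ?thesis using unitary_adj_mult[OF U] by (simp add: unitary_def)
qed

lemma four_block_spectral_mat:
  assumes U: "unitary n U"
  shows "four_block_mat (rdiag 1 (\<lambda>_. r)) (0\<^sub>m 1 n) (0\<^sub>m n 1) (spectral_mat n U l) =
    spectral_mat (1 + n) (four_block_mat (1\<^sub>m 1) (0\<^sub>m 1 n) (0\<^sub>m n 1) U) (\<lambda>i. if i = 0 then r else l (i - 1))"
proof -
  note block_mult = mult_four_block_mat[of _ 1 1 _ n _ n _ _ 1 _ n]
  have Uc: "U \<in> carrier_mat n n" using U unitary_carrier_mat by auto
  have "four_block_mat (1\<^sub>m 1) (0\<^sub>m 1 n) (0\<^sub>m n 1) U * rdiag (1 + n) (\<lambda>i. if i = 0 then r else l (i - 1))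
      = four_block_mat (rdiag 1 (\<lambda>_. r)) (0\<^sub>m 1 n) (0\<^sub>m n 1) (U * rdiag n l)"
    unfolding rdiag_four_block_mat using Uc by (simp add: block_mult)
  moreover have "adj (four_block_mat (1\<^sub>m 1) (0\<^sub>m 1 n) (0\<^sub>m n 1) U) = four_block_mat (1\<^sub>m 1) (0\<^sub>m 1 n) (0\<^sub>m n 1) (adj U)"
    using Uc by (simp add: adj_four_block_mat)
  ultimately show ?thesis using Uc by (simp add: block_mult)
qed

lemma cinner_eq_cscalar_prod: "v \<in> carrier_vec n \<Longrightarrow> w \<in> carrier_vec n \<Longrightarrow> cinner n v w = w \<bullet>c v"
  by (simp add: cinner_def scalar_prod_def atLeast0LessThan mult.commute)

lemma corthogonal_basis_starting_with:
  fixes u :: "complex vec"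
  assumes u: "u \<in> carrier_vec n" "u \<noteq> 0\<^sub>v n"
  shows "\<exists>ws. corthogonal ws \<and> set ws \<subseteq> carrier_vec n \<and> length ws = n \<and> ws ! 0 = u"
proof -
  interpret cof_vec_space n "TYPE(complex)" .
  define b where "b = basis_completion u"
  note b = basis_completion[OF u, folded b_def]
  define ws where "ws = gram_schmidt n b"
  from gram_schmidt_result[OF b(2) b(4) b(5) ws_def] b(6)
  have ws: "corthogonal ws" "set ws \<subseteq> carrier_vec n" "length ws = n" by auto
  have "n \<noteq> 0" using u by auto
  with b(6,7) obtain rest where "b = u # rest" by (cases b) auto
  with u have "hd ws = u" by (simp add: ws_def)
  with ws(3) \<open>n \<noteq> 0\<close> have "ws ! 0 = u" by (cases ws) auto
  with ws show ?thesis by blast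
qed

lemma unitary_normalize_cols:
  assumes ws: "corthogonal ws" "set ws \<subseteq> carrier_vec n" "length ws = n"
  defines "c \<equiv> \<lambda>j. \<Sum>i<n. (cmod (ws ! j $ i))\<^sup>2"
  shows "unitary n (mat n n (\<lambda>(i,j). ws ! j $ i / complex_of_real (sqrt (c j))))"
    (is "unitary n ?U")
proof -
  have wsj: "ws ! j \<in> carrier_vec n" if "j < n" for j using ws that by auto
  have inner_ws: "cinner n (ws ! j) (ws ! k) = (if j = k then complex_of_real (c j) else 0)"
    if j: "j < n" and k: "k < n" for j k
  proof (cases "j = k")
    case True thus ?thesis by (simp add: c_def cinner_self)
  next
    case False thus ?thesis
      using corthogonalD[OF ws(1), of k j] j k ws(3) by (simp add: cinner_eq_cscalar_prod[OF wsj wsj])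
  qed
  have c_pos: "0 < c j" if j: "j < n" for j
  proof -
    have "c j \<noteq> 0"
      using corthogonalD[OF ws(1), of j j] j ws(3) inner_ws[OF j j] by (simp add: cinner_eq_cscalar_prod[OF wsj wsj])
    moreover have "0 \<le> c j" unfolding c_def by (auto intro: sum_nonneg)
    ultimately show ?thesis by simp
  qed
  have "adj ?U * ?U = 1\<^sub>m n"
  proof (rule eq_matI)
    fix j k assume "j < dim_row (1\<^sub>m n)" "k < dim_col (1\<^sub>m n)"
    hence j: "j < n" and k: "k < n" by auto
    have "(adj ?U * ?U) $$ (j,k) = (\<Sum>i<n. cnj (?U $$ (i,j)) * ?U $$ (i,k))"
      by (rule index_adj_mult) (use j k in auto)
    also have "\<dots> = cinner n (ws ! j) (ws ! k) / complex_of_real (sqrt (c j) * sqrt (c k))"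
      using j k by (simp add: cinner_def sum_divide_distrib)
    also have "\<dots> = 1\<^sub>m n $$ (j,k)"
      using inner_ws[OF j k] c_pos[OF j] j k by (cases "j = k") (simp_all flip: of_real_mult)
    finally show "(adj ?U * ?U) $$ (j,k) = 1\<^sub>m n $$ (j,k)" .
  qed auto
  thus ?thesis by (simp add: unitary_def)
qed

lemma unitary_extend_unit_vec:
  assumes u: "u \<in> carrier_vec n" and u_unit: "cinner n u u = 1"
  shows "\<exists>U. unitary n U \<and> col U 0 = u"
proof -
  have "u \<noteq> 0\<^sub>v n" using u_unit by (auto simp: cinner_def)
  then obtain ws where ws: "corthogonal ws" "set ws \<subseteq> carrier_vec n" "length ws = n" and ws0: "ws ! 0 = u"
    using corthogonal_basis_starting_with[OF u] by blast
  define U where "U = mat n n (\<lambda>(i,j). ws ! j $ i / complex_of_real (sqrt (\<Sum>i<n. (cmod (ws ! j $ i))\<^sup>2)))"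
  have "unitary n U" unfolding U_def by (rule unitary_normalize_cols[OF ws])
  moreover have "complex_of_real (\<Sum>i<n. (cmod (u $ i))\<^sup>2) = 1" using u_unit by (simp only: cinner_self)
  hence "(\<Sum>i<n. (cmod (u $ i))\<^sup>2) = 1" by (simp only: of_real_eq_1_iff)
  hence "col U 0 = u" using u \<open>u \<noteq> 0\<^sub>v n\<close> ws0 by (auto simp: U_def intro!: eq_vecI)
  ultimately show ?thesis by blast
qed

lemma unit_eigenvector_exists:
  fixes A :: "complex mat"
  assumes A: "A \<in> carrier_mat n n" and n: "0 < n"
  shows "\<exists>a u. u \<in> carrier_vec n \<and> cinner n u u = 1 \<and> A *\<^sub>v u = a \<cdot>\<^sub>v u"
proof -
  obtain as where cp: "char_poly A = (\<Prod>a\<leftarrow>as. [:- a, 1:])" and len: "length as = n"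
    using char_poly_factorized[OF A] by blast
  obtain a rest where "as = a # rest" using len n by (cases as) auto
  hence "poly (char_poly A) a = 0" unfolding cp by simp
  then obtain v where "eigenvector A v a"
    using eigenvalue_root_char_poly[OF A] unfolding eigenvalue_def by blast
  hence v: "v \<in> carrier_vec n" "v \<noteq> 0\<^sub>v n" "A *\<^sub>v v = a \<cdot>\<^sub>v v" using A by (auto simp: eigenvector_def)
  define r where "r = (\<Sum>i<n. (cmod (v $ i))\<^sup>2)"
  have "r \<noteq> 0"
  proof
    assume "r = 0"
    hence "\<forall>i\<in>{..<n}. (cmod (v $ i))\<^sup>2 = 0" unfolding r_def by (subst (asm) sum_nonneg_eq_0_iff) auto
    hence "v = 0\<^sub>v n" using v(1) by (auto intro!: eq_vecI)
    with v(2) show False by simp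
  qed
  moreover have "0 \<le> r" unfolding r_def by (auto intro: sum_nonneg)
  ultimately have r: "0 < r" by simp
  define u where "u = complex_of_real (1 / sqrt r) \<cdot>\<^sub>v v"
  have "cinner n u u = complex_of_real (1 / sqrt r) * complex_of_real (1 / sqrt r) * cinner n v v"
    using v(1) by (simp add: u_def cinner_def sum_distrib_left mult_ac)
  also have "\<dots> = complex_of_real (1 / sqrt r * (1 / sqrt r) * r)"
    by (simp only: cinner_self r_def of_real_mult)
  also have "\<dots> = 1" using r by simp
  finally have "cinner n u u = 1" .
  moreover have "A *\<^sub>v u = a \<cdot>\<^sub>v u"
    unfolding u_def using mult_mat_vec[OF A v(1)] v(3) by (simp add: smult_smult_assoc mult.commute)
  moreover have "u \<in> carrier_vec n" using v(1) by (simp add: u_def)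
  ultimately show ?thesis by blast
qed

lemma hermitian_block_diag_of_first_col:
  assumes B: "B \<in> carrier_mat (Suc n) (Suc n)" and H: "adj B = B"
    and col_B0: "col B 0 = a \<cdot>\<^sub>v unit_vec (Suc n) 0"
  shows "\<exists>r B'. B' \<in> carrier_mat n n \<and> adj B' = B' \<and>
    B = four_block_mat (rdiag 1 (\<lambda>_. r)) (0\<^sub>m 1 n) (0\<^sub>m n 1) B'"
proof -
  have BH: "B $$ (i,j) = cnj (B $$ (j,i))" if "i < Suc n" "j < Suc n" for i j
    using arg_cong[OF H, of "\<lambda>M. M $$ (i,j)"] that B by simp
  have col_B: "B $$ (i,0) = (if i = 0 then a else 0)" if "i < Suc n" for i
    using arg_cong[OF col_B0, of "\<lambda>v. v $ i"] that B by (auto simp: unit_vec_def)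
  have "cnj a = a" using BH[of 0 0] col_B[of 0] by simp
  then obtain r where a: "a = complex_of_real r" by (metis Reals_cnj_iff Reals_cases)
  have row_B: "B $$ (0,j) = (if j = 0 then a else 0)" if j: "j < Suc n" for j
    using BH[of 0 j] col_B[OF j] a j by auto
  define B' where "B' = mat n n (\<lambda>(i,j). B $$ (Suc i, Suc j))"
  have "B = four_block_mat (rdiag 1 (\<lambda>_. r)) (0\<^sub>m 1 n) (0\<^sub>m n 1) B'"
  proof (rule eq_matI)
    fix i j assume "i < dim_row (four_block_mat (rdiag 1 (\<lambda>_. r)) (0\<^sub>m 1 n) (0\<^sub>m n 1) B')"
      "j < dim_col (four_block_mat (rdiag 1 (\<lambda>_. r)) (0\<^sub>m 1 n) (0\<^sub>m n 1) B')"
    hence i: "i < Suc n" and j: "j < Suc n" by (auto simp: B'_def)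
    show "B $$ (i,j) = four_block_mat (rdiag 1 (\<lambda>_. r)) (0\<^sub>m 1 n) (0\<^sub>m n 1) B' $$ (i,j)"
      using i j col_B[OF i] row_B[OF j] by (auto simp: B'_def a)
  qed (use B in \<open>auto simp: B'_def\<close>)
  moreover have "adj B' = B'"
  proof (rule eq_matI)
    fix i j assume "i < dim_row B'" "j < dim_col B'"
    thus "adj B' $$ (i,j) = B' $$ (i,j)" using BH[of "Suc j" "Suc i"] by (simp add: B'_def)
  qed (auto simp: B'_def)
  moreover have "B' \<in> carrier_mat n n" by (simp add: B'_def)
  ultimately show ?thesis by blast
qed

lemma hermitian_deflation:
  assumes A: "A \<in> carrier_mat (Suc n) (Suc n)" and H: "adj A = A"
  shows "\<exists>W r A'. unitary (Suc n) W \<and> A' \<in> carrier_mat n n \<and> adj A' = A' \<and>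
    A = W * four_block_mat (rdiag 1 (\<lambda>_. r)) (0\<^sub>m 1 n) (0\<^sub>m n 1) A' * adj W"
proof -
  note assoc = assoc_mult_mat[of _ "Suc n" "Suc n" _ "Suc n" _ "Suc n"]
  obtain a u where u: "u \<in> carrier_vec (Suc n)" "cinner (Suc n) u u = 1" and Au: "A *\<^sub>v u = a \<cdot>\<^sub>v u"
    using unit_eigenvector_exists[OF A] by blast
  obtain W where W: "unitary (Suc n) W" and W0: "col W 0 = u"
    using unitary_extend_unit_vec[OF u] by blast
  have Wc: "W \<in> carrier_mat (Suc n) (Suc n)" using W unitary_carrier_mat by blast
  define B where "B = adj W * A * W"
  have "col B 0 = adj W *\<^sub>v (A *\<^sub>v col W 0)"
    using Wc A u
    by (simp add: B_def W0 col_mult2[of _ "Suc n" "Suc n" _ "Suc n"] assoc_mult_mat_vec[of _ "Suc n" "Suc n" _ "Suc n"])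
  also have "\<dots> = a \<cdot>\<^sub>v col (adj W * W) 0"
    using Wc u by (simp add: W0 Au mult_mat_vec[of "adj W" "Suc n" "Suc n"] col_mult2[of _ "Suc n" "Suc n" _ "Suc n"])
  also have "\<dots> = a \<cdot>\<^sub>v unit_vec (Suc n) 0" using unitary_adj_mult[OF W] by simp
  finally have "col B 0 = a \<cdot>\<^sub>v unit_vec (Suc n) 0" .
  moreover have "adj B = B" using Wc A H by (simp add: B_def adj_mult[of _ "Suc n" "Suc n" _ "Suc n"] assoc)
  moreover have "B \<in> carrier_mat (Suc n) (Suc n)" using Wc A by (simp add: B_def)
  ultimately obtain r A' where A': "A' \<in> carrier_mat n n" "adj A' = A'"
    and B_eq: "B = four_block_mat (rdiag 1 (\<lambda>_. r)) (0\<^sub>m 1 n) (0\<^sub>m n 1) A'"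
    using hermitian_block_diag_of_first_col by blast
  have "W * B * adj W = (W * adj W) * A * (W * adj W)"
    using Wc A by (simp add: B_def assoc)
  hence "A = W * B * adj W" using A unitary_mult_adj[OF W] by simp
  thus ?thesis using W A' unfolding B_eq by blast
qed

theorem hermitian_spectral_decomposition:
  "A \<in> carrier_mat n n \<Longrightarrow> adj A = A \<Longrightarrow> \<exists>U l. unitary n U \<and> A = spectral_mat n U l"
proof (induction n arbitrary: A)
  case 0
  have "A = spectral_mat 0 (1\<^sub>m 0) (\<lambda>_. 0)" using 0 by (auto intro!: eq_matI)
  moreover have "unitary 0 (1\<^sub>m 0)" by (simp add: unitary_def)
  ultimately show ?case by blast
next
  case (Suc n)
  obtain W r A' where W: "unitary (Suc n) W" and A': "A' \<in> carrier_mat n n" "adj A' = A'"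
    and A: "A = W * four_block_mat (rdiag 1 (\<lambda>_. r)) (0\<^sub>m 1 n) (0\<^sub>m n 1) A' * adj W"
    using hermitian_deflation[OF Suc.prems] by blast
  obtain U l where U: "unitary n U" and "A' = spectral_mat n U l"
    using Suc.IH[OF A'] by blast
  with A have "A = W * spectral_mat (Suc n) (four_block_mat (1\<^sub>m 1) (0\<^sub>m 1 n) (0\<^sub>m n 1) U)
      (\<lambda>i. if i = 0 then r else l (i - 1)) * adj W"
    using four_block_spectral_mat[OF U] by simp
  also have "\<dots> = spectral_mat (Suc n) (W * four_block_mat (1\<^sub>m 1) (0\<^sub>m 1 n) (0\<^sub>m n 1) U)
      (\<lambda>i. if i = 0 then r else l (i - 1))"
    using unitary_carrier_mat[OF W] unitary_carrier_mat[OF unitary_four_block_mat[OF U]]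
    by (simp add: adj_mult[of _ "Suc n" "Suc n"] assoc_mult_mat[of _ "Suc n" "Suc n" _ "Suc n" _ "Suc n"])
  finally show ?case using unitary_mult[OF W] unitary_four_block_mat[OF U] by auto
qed

section \<open>Spectral calculus, positive semidefinite matrices and their square roots\<close>

lemma rdiag_intertwine_fun:
  assumes X: "X \<in> carrier_mat n n" and h: "rdiag n l * X = X * rdiag n m"
  shows "rdiag n (\<lambda>i. f (l i)) * X = X * rdiag n (\<lambda>i. f (m i))"
proof (rule eq_matI)
  fix i j assume "i < dim_row (X * rdiag n (\<lambda>i. f (m i)))" "j < dim_col (X * rdiag n (\<lambda>i. f (m i)))"
  hence i: "i < n" and j: "j < n" using X by auto
  from arg_cong[OF h, of "\<lambda>M. M $$ (i,j)"] i j X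
  have "complex_of_real (l i) * X $$ (i,j) = X $$ (i,j) * complex_of_real (m j)"
    by (simp del: index_mult_mat(1))
  hence "X $$ (i,j) = 0 \<or> l i = m j" by (auto simp: mult.commute)
  thus "(rdiag n (\<lambda>i. f (l i)) * X) $$ (i,j) = (X * rdiag n (\<lambda>i. f (m i))) $$ (i,j)"
    using i j X by (auto simp: mult.commute simp del: index_mult_mat(1))
qed (use X in auto)

lemma spectral_mat_intertwine_fun:
  assumes V: "unitary n V" and W: "W \<in> carrier_mat n n"
    and h: "spectral_mat n V l * W = W * rdiag n m"
  shows "spectral_mat n V (\<lambda>i. f (l i)) * W = W * rdiag n (\<lambda>i. f (m i))"
proof -
  note assoc = assoc_mult_mat[of _ n n _ n _ n]
  have Vc: "V \<in> carrier_mat n n" using V unitary_carrier_mat by blast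
  have "adj V * (spectral_mat n V l * W) = (adj V * V) * rdiag n l * (adj V * W)"
    using Vc W by (simp add: assoc)
  hence "rdiag n l * (adj V * W) = adj V * (spectral_mat n V l * W)"
    using Vc W unitary_adj_mult[OF V] by simp
  also have "\<dots> = adj V * (W * rdiag n m)" by (simp only: h)
  also have "\<dots> = adj V * W * rdiag n m" using Vc W by (simp add: assoc)
  finally have "rdiag n l * (adj V * W) = adj V * W * rdiag n m" .
  from rdiag_intertwine_fun[OF _ this, of f]
  have "rdiag n (\<lambda>i. f (l i)) * (adj V * W) = adj V * W * rdiag n (\<lambda>i. f (m i))"
    using Vc W by simp
  hence "V * (rdiag n (\<lambda>i. f (l i)) * (adj V * W)) = (V * adj V) * W * rdiag n (\<lambda>i. f (m i))"
    using Vc W by (simp add: assoc)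
  thus ?thesis using Vc W unitary_mult_adj[OF V] by (simp add: assoc)
qed

text \<open>Applying a function to the eigenvalues does not depend on the chosen
  diagonalisation; this makes the descriptions of \<^const>\<open>psd_sqrt\<close> and
  \<^const>\<open>mat_powr\<close> well defined.\<close>
lemma spectral_mat_fun_cong:
  assumes U: "unitary n U" and V: "unitary n V"
    and eq: "spectral_mat n U l = spectral_mat n V m"
  shows "spectral_mat n U (\<lambda>i. f (l i)) = spectral_mat n V (\<lambda>i. f (m i))"
proof -
  note assoc = assoc_mult_mat[of _ n n _ n _ n]
  have Uc: "U \<in> carrier_mat n n" and Vc: "V \<in> carrier_mat n n"
    using U V unitary_carrier_mat by auto
  have "spectral_mat n V m * U = U * rdiag n l"
    using Uc unitary_adj_mult[OF U] by (simp add: eq[symmetric] assoc)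
  from spectral_mat_intertwine_fun[OF V Uc this]
  have "spectral_mat n V (\<lambda>i. f (m i)) * U * adj U = spectral_mat n U (\<lambda>i. f (l i))" by simp
  thus ?thesis using Uc Vc unitary_mult_adj[OF U] by (simp add: assoc)
qed

lemma psd_iff: "psd n A \<longleftrightarrow> A \<in> carrier_mat n n \<and> adj A = A \<and>
    (\<forall>v \<in> carrier_vec n. 0 \<le> Re (cinner n v (A *\<^sub>v v)))"
  by (simp add: psd_def cinner_def)

lemma psd_carrier_mat: "psd n A \<Longrightarrow> A \<in> carrier_mat n n"
  by (simp add: psd_def)

lemma psd_adj: "psd n A \<Longrightarrow> adj A = A"
  by (simp add: psd_def)

lemma psd_cinner_nonneg: "psd n A \<Longrightarrow> v \<in> carrier_vec n \<Longrightarrow> 0 \<le> Re (cinner n v (A *\<^sub>v v))"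
  by (simp add: psd_iff)

lemma psd_zero: "psd n (0\<^sub>m n n)"
  by (simp add: psd_iff cinner_def)

lemma psd_add:
  assumes A: "psd n A" and B: "psd n B"
  shows "psd n (A + B)"
proof -
  have Ac: "A \<in> carrier_mat n n" and Bc: "B \<in> carrier_mat n n"
    using A B psd_carrier_mat by auto
  have "adj (A + B) = A + B" using psd_adj[OF A] psd_adj[OF B] by (simp add: adj_add[OF Ac Bc])
  moreover have "0 \<le> Re (cinner n v ((A + B) *\<^sub>v v))" if v: "v \<in> carrier_vec n" for v
  proof -
    have "cinner n v ((A + B) *\<^sub>v v) = cinner n v (A *\<^sub>v v) + cinner n v (B *\<^sub>v v)"
      using Ac Bc v by (simp add: add_mult_distrib_mat_vec[OF Ac Bc v] cinner_def sum.distrib algebra_simps)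
    thus ?thesis using psd_cinner_nonneg[OF A v] psd_cinner_nonneg[OF B v] by simp
  qed
  ultimately show ?thesis using Ac Bc by (simp add: psd_iff)
qed

lemma psd_smult:
  assumes A: "psd n A" and c: "0 \<le> c"
  shows "psd n (complex_of_real c \<cdot>\<^sub>m A)"
proof -
  have Ac: "A \<in> carrier_mat n n" using A psd_carrier_mat by auto
  have "adj (complex_of_real c \<cdot>\<^sub>m A) = complex_of_real c \<cdot>\<^sub>m A"
    using psd_adj[OF A] by (simp add: adj_smult)
  moreover have "0 \<le> Re (cinner n v ((complex_of_real c \<cdot>\<^sub>m A) *\<^sub>v v))" if v: "v \<in> carrier_vec n" for v
  proof -
    have "cinner n v ((complex_of_real c \<cdot>\<^sub>m A) *\<^sub>v v) = complex_of_real c * cinner n v (A *\<^sub>v v)"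
      using Ac v by (simp add: cinner_def sum_distrib_left algebra_simps scalar_prod_def)
    thus ?thesis using psd_cinner_nonneg[OF A v] c by simp
  qed
  ultimately show ?thesis using Ac by (simp add: psd_iff)
qed

lemma adj_spectral_mat: "U \<in> carrier_mat n n \<Longrightarrow> adj (spectral_mat n U l) = spectral_mat n U l"
  by (simp add: adj_mult[of _ n n _ n] assoc_mult_mat[of _ n n _ n _ n])

lemma psd_spectral_mat:
  assumes U: "unitary n U" and l: "\<And>i. i < n \<Longrightarrow> 0 \<le> l i"
  shows "psd n (spectral_mat n U l)"
proof -
  have Uc: "U \<in> carrier_mat n n" using U unitary_carrier_mat by auto
  have "0 \<le> Re (cinner n v (spectral_mat n U l *\<^sub>v v))" if v: "v \<in> carrier_vec n" for v
  proof -
    define w where "w = adj U *\<^sub>v v"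
    have w: "w \<in> carrier_vec n" using mult_mat_vec_carrier[OF adj_carrier_mat[OF Uc] v] by (simp add: w_def)
    have "spectral_mat n U l *\<^sub>v v = U *\<^sub>v (rdiag n l *\<^sub>v w)"
      unfolding w_def using Uc v w[unfolded w_def]
      by (simp add: assoc_mult_mat_vec[of _ n n _ n] del: assoc_mult_mat_vec)
    hence "cinner n v (spectral_mat n U l *\<^sub>v v) = cinner n w (rdiag n l *\<^sub>v w)"
      using cinner_mult_mat_vec[OF Uc v mult_mat_vec_carrier[OF rdiag_carrier_mat w], folded w_def]
      by (simp only:)
    also have "\<dots> = complex_of_real (\<Sum>i<n. l i * (cmod (w $ i))\<^sup>2)"
      using w unfolding cinner_def rdiag_mult_vec[OF w] of_real_sum
      by (intro sum.cong) (auto simp: complex_norm_square mult_ac simp del: of_real_power)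
    finally show ?thesis using l by (auto intro!: sum_nonneg)
  qed
  thus ?thesis using Uc adj_spectral_mat[OF Uc] by (simp add: psd_iff)
qed

lemma psd_spectral_mat_nonneg:
  assumes A: "psd n A" and U: "unitary n U" and eq: "A = spectral_mat n U l" and i: "i < n"
  shows "0 \<le> l i"
proof -
  have Uc: "U \<in> carrier_mat n n" using U unitary_carrier_mat by auto
  have Ac: "A \<in> carrier_mat n n" using A psd_carrier_mat by auto
  define w where "w = col U i"
  have w: "w \<in> carrier_vec n" using Uc i by (simp add: w_def)
  have "A * U = U * rdiag n l"
    using Uc unitary_adj_mult[OF U] by (simp add: eq assoc_mult_mat[of _ n n _ n _ n])
  hence "A *\<^sub>v w = complex_of_real (l i) \<cdot>\<^sub>v w"
    using Uc Ac i unfolding w_def col_mult2[OF Ac Uc i, symmetric]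
    by (auto intro!: eq_vecI simp: mult.commute simp del: index_mult_mat(1))
  hence "cinner n w (A *\<^sub>v w) = complex_of_real (l i) * cinner n w w"
    using w by (simp add: cinner_def sum_distrib_left mult_ac)
  moreover have "cinner n w w = 1"
    using index_adj_mult[OF Uc Uc i i] unitary_adj_mult[OF U] Uc i by (simp add: cinner_def w_def)
  ultimately have "cinner n w (A *\<^sub>v w) = complex_of_real (l i)" by simp
  with psd_cinner_nonneg[OF A w] show ?thesis by simp
qed

lemma psd_spectral_decomposition:
  assumes A: "psd n A"
  shows "\<exists>U l. unitary n U \<and> A = spectral_mat n U l \<and> (\<forall>i<n. 0 \<le> l i)"
proof -
  obtain U l where U: "unitary n U" and A_eq: "A = spectral_mat n U l"
    using hermitian_spectral_decomposition[OF psd_carrier_mat[OF A] psd_adj[OF A]] by (elim exE conjE)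
  have "\<forall>i<n. 0 \<le> l i" using psd_spectral_mat_nonneg[OF A U A_eq] by blast
  with U A_eq show ?thesis by blast
qed

lemma psd_square_inj:
  assumes B: "psd n B" and C: "psd n C" and eq: "B * B = C * C"
  shows "B = C"
proof -
  obtain U b where U: "unitary n U" and B_eq: "B = spectral_mat n U b" and b: "\<forall>i<n. 0 \<le> b i"
    using psd_spectral_decomposition[OF B] by (elim exE conjE)
  obtain V c where V: "unitary n V" and C_eq: "C = spectral_mat n V c" and c: "\<forall>i<n. 0 \<le> c i"
    using psd_spectral_decomposition[OF C] by (elim exE conjE)
  have "spectral_mat n U (\<lambda>i. b i * b i) = spectral_mat n V (\<lambda>i. c i * c i)"
    using eq unfolding B_eq C_eq spectral_mat_mult_spectral_mat[OF U] spectral_mat_mult_spectral_mat[OF V] .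
  from spectral_mat_fun_cong[OF U V this, of sqrt]
  have "spectral_mat n U (\<lambda>i. sqrt (b i * b i)) = spectral_mat n V (\<lambda>i. sqrt (c i * c i))" .
  moreover have "rdiag n (\<lambda>i. sqrt (b i * b i)) = rdiag n b" using b by (intro rdiag_cong) simp
  moreover have "rdiag n (\<lambda>i. sqrt (c i * c i)) = rdiag n c" using c by (intro rdiag_cong) simp
  ultimately show ?thesis using B_eq C_eq by simp
qed

lemma psd_sqrt_eqI:
  assumes A: "A \<in> carrier_mat n n" and B: "psd n B" and BA: "B * B = A"
  shows "psd_sqrt A = B"
  unfolding psd_sqrt_def
proof (rule the_equality)
  show "psd (dim_row A) B \<and> B * B = A" using A B BA by simp
next
  fix C assume "psd (dim_row A) C \<and> C * C = A"
  hence "psd n C" "C * C = B * B" using A BA by auto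
  thus "C = B" using psd_square_inj[OF _ B] by blast
qed

lemma psd_sqrt:
  assumes A: "psd n A"
  shows "psd n (psd_sqrt A)" and "psd_sqrt A * psd_sqrt A = A"
proof -
  obtain U l where U: "unitary n U" and A_eq: "A = spectral_mat n U l" and l: "\<forall>i<n. 0 \<le> l i"
    using psd_spectral_decomposition[OF A] by blast
  define B where "B = spectral_mat n U (\<lambda>i. sqrt (l i))"
  have B: "psd n B" unfolding B_def by (rule psd_spectral_mat[OF U]) (use l in auto)
  have "B * B = spectral_mat n U (\<lambda>i. sqrt (l i) * sqrt (l i))"
    unfolding B_def by (rule spectral_mat_mult_spectral_mat[OF U])
  also have "rdiag n (\<lambda>i. sqrt (l i) * sqrt (l i)) = rdiag n l" using l by (intro rdiag_cong) simp
  finally have "B * B = A" using A_eq by simp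
  hence "psd_sqrt A = B" by (rule psd_sqrt_eqI[OF psd_carrier_mat[OF A] B])
  thus "psd n (psd_sqrt A)" "psd_sqrt A * psd_sqrt A = A" using B \<open>B * B = A\<close> by simp_all
qed

lemma mat_powr_spectral_mat:
  assumes U: "unitary n U"
  shows "mat_powr (spectral_mat n U l) s = spectral_mat n U (\<lambda>i. l i powr s)"
proof -
  have dim: "dim_row (spectral_mat n U l) = n" using unitary_carrier_mat[OF U] by simp
  show ?thesis
    unfolding mat_powr_def dim
  proof (rule the_equality)
    show "\<exists>V m. unitary n V \<and> spectral_mat n U l = spectral_mat n V m \<and>
        spectral_mat n U (\<lambda>i. l i powr s) = spectral_mat n V (\<lambda>i. m i powr s)"
      using U by (intro exI[of _ U] exI[of _ l]) simp
  next
    fix B assume "\<exists>V m. unitary n V \<and> spectral_mat n U l = spectral_mat n V m \<and>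
        B = spectral_mat n V (\<lambda>i. m i powr s)"
    then obtain V m where V: "unitary n V" and eq: "spectral_mat n U l = spectral_mat n V m"
      and B: "B = spectral_mat n V (\<lambda>i. m i powr s)" by (elim exE conjE)
    show "B = spectral_mat n U (\<lambda>i. l i powr s)"
      unfolding B by (rule spectral_mat_fun_cong[OF V U eq[symmetric]])
  qed
qed

section \<open>Fidelities between a state and its mixture with an orthogonal state\<close>

abbreviation convex_comb :: "real \<Rightarrow> complex mat \<Rightarrow> complex mat \<Rightarrow> complex mat" where
  "convex_comb e A B \<equiv> complex_of_real e \<cdot>\<^sub>m A + complex_of_real (1 - e) \<cdot>\<^sub>m B"

lemma psd_convex_comb: "psd n A \<Longrightarrow> psd n B \<Longrightarrow> 0 \<le> e \<Longrightarrow> e \<le> 1 \<Longrightarrow> psd n (convex_comb e A B)"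
  by (intro psd_add psd_smult) auto

lemma psd_mult_eq_zero_commute:
  assumes A: "psd n A" and B: "psd n B" and AB: "A * B = 0\<^sub>m n n"
  shows "B * A = 0\<^sub>m n n"
proof -
  have "B * A = adj (A * B)"
    using psd_carrier_mat[OF A] psd_carrier_mat[OF B] by (simp add: adj_mult psd_adj[OF A] psd_adj[OF B])
  thus ?thesis using AB by simp
qed

lemma psd_sqrt_mult_eq_zero:
  assumes A: "psd n A" and B: "psd n B" and BA: "B * A = 0\<^sub>m n n"
  shows "psd_sqrt A * B = 0\<^sub>m n n"
proof -
  note assoc = assoc_mult_mat[of _ n n _ n _ n]
  define S where "S = psd_sqrt A"
  have S: "psd n S" "S * S = A" using psd_sqrt[OF A] by (simp_all add: S_def)
  have Sc: "S \<in> carrier_mat n n" and Bc: "B \<in> carrier_mat n n"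
    using S(1) B psd_carrier_mat by auto
  have "adj (S * B) * (S * B) = B * (S * S) * B"
    using Sc Bc by (simp add: adj_mult psd_adj[OF S(1)] psd_adj[OF B] assoc)
  also have "\<dots> = 0\<^sub>m n n" using Bc by (simp add: S(2) BA)
  finally have "S * B = 0\<^sub>m n n" using adj_mult_self_eq_zero[of "S * B" n n] Sc Bc by simp
  thus ?thesis by (simp add: S_def)
qed

lemma psd_sqrt_mult_psd_sqrt_eq_zero:
  assumes A: "psd n A" and B: "psd n B" and AB: "A * B = 0\<^sub>m n n"
  shows "psd_sqrt A * psd_sqrt B = 0\<^sub>m n n"
proof -
  have "psd_sqrt A * B = 0\<^sub>m n n"
    by (rule psd_sqrt_mult_eq_zero[OF A B psd_mult_eq_zero_commute[OF A B AB]])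
  hence "psd_sqrt B * psd_sqrt A = 0\<^sub>m n n"
    by (rule psd_sqrt_mult_eq_zero[OF B psd_sqrt(1)[OF A]])
  thus ?thesis by (rule psd_mult_eq_zero_commute[OF psd_sqrt(1)[OF B] psd_sqrt(1)[OF A]])
qed

lemma psd_sqrt_convex_comb:
  assumes A: "psd n A" and B: "psd n B" and AB: "A * B = 0\<^sub>m n n" and e: "0 \<le> e" "e \<le> 1"
  shows "psd_sqrt (convex_comb e A B) =
    complex_of_real (sqrt e) \<cdot>\<^sub>m psd_sqrt A + complex_of_real (sqrt (1 - e)) \<cdot>\<^sub>m psd_sqrt B"
    (is "_ = ?R")
proof (rule psd_sqrt_eqI)
  define S T where "S = psd_sqrt A" and "T = psd_sqrt B"
  have S: "psd n S" "S * S = A" and T: "psd n T" "T * T = B"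
    using psd_sqrt[OF A] psd_sqrt[OF B] by (simp_all add: S_def T_def)
  have Sc: "S \<in> carrier_mat n n" and Tc: "T \<in> carrier_mat n n" using S T psd_carrier_mat by auto
  have ST: "S * T = 0\<^sub>m n n" using psd_sqrt_mult_psd_sqrt_eq_zero[OF A B AB] by (simp add: S_def T_def)
  have TS: "T * S = 0\<^sub>m n n" by (rule psd_mult_eq_zero_commute[OF S(1) T(1) ST])
  show "psd n ?R" unfolding S_def[symmetric] T_def[symmetric]
    by (intro psd_add psd_smult S(1) T(1)) (use e in auto)
  have "?R * ?R = complex_of_real e \<cdot>\<^sub>m (S * S) + complex_of_real (1 - e) \<cdot>\<^sub>m (T * T)"
    unfolding S_def[symmetric] T_def[symmetric] using Sc Tc ST TS e
    by (simp add: add_mult_distrib_mat[of _ n n _ _ n] mult_add_distrib_mat[of _ n n _ n]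
        mult_smult_assoc_mat[of _ n n _ n] mult_smult_distrib[of _ n n _ n] smult_smult_mat flip: of_real_mult)
  thus "?R * ?R = convex_comb e A B" using S T by simp
  show "convex_comb e A B \<in> carrier_mat n n" using A B psd_carrier_mat by auto
qed

lemma psd_sqrt_smult_square:
  assumes A: "psd n A" and c: "0 \<le> c"
  shows "psd_sqrt (complex_of_real c \<cdot>\<^sub>m (A * A)) = complex_of_real (sqrt c) \<cdot>\<^sub>m A"
proof (rule psd_sqrt_eqI)
  have Ac: "A \<in> carrier_mat n n" using A psd_carrier_mat by auto
  show "complex_of_real c \<cdot>\<^sub>m (A * A) \<in> carrier_mat n n" using Ac by simp
  show "psd n (complex_of_real (sqrt c) \<cdot>\<^sub>m A)" using A c by (simp add: psd_smult)
  show "complex_of_real (sqrt c) \<cdot>\<^sub>m A * (complex_of_real (sqrt c) \<cdot>\<^sub>m A) = complex_of_real c \<cdot>\<^sub>m (A * A)"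
    using Ac c by (simp add: mult_smult_assoc_mat[of _ n n _ n] mult_smult_distrib[of _ n n _ n] smult_smult_mat
        flip: of_real_mult)
qed

lemma fid1_convex_comb_orthogonal:
  assumes \<rho>: "density n \<rho>" and \<tau>: "psd n \<tau>" and \<tau>\<rho>: "\<tau> * \<rho> = 0\<^sub>m n n" and e: "0 \<le> e" "e \<le> 1"
  shows "fid1 \<rho> (convex_comb e \<tau> \<rho>) = 1 - e"
proof -
  note assoc = assoc_mult_mat[of _ n n _ n _ n]
  have \<rho>_psd: "psd n \<rho>" and tr_\<rho>: "tr \<rho> = 1" using \<rho> by (auto simp: density_def)
  define S where "S = psd_sqrt \<rho>"
  have S: "psd n S" "S * S = \<rho>" using psd_sqrt[OF \<rho>_psd] by (simp_all add: S_def)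
  have Sc: "S \<in> carrier_mat n n" and \<rho>c: "\<rho> \<in> carrier_mat n n" and \<tau>c: "\<tau> \<in> carrier_mat n n"
    using S(1) \<rho>_psd \<tau> psd_carrier_mat by auto
  have S\<tau>: "S * \<tau> = 0\<^sub>m n n" unfolding S_def by (rule psd_sqrt_mult_eq_zero[OF \<rho>_psd \<tau> \<tau>\<rho>])
  have "S * convex_comb e \<tau> \<rho> * S = complex_of_real (1 - e) \<cdot>\<^sub>m ((S * S) * (S * S))"
    using Sc \<tau>c \<rho>c S\<tau> unfolding S(2)[symmetric]
    by (simp add: mult_add_distrib_mat[of _ n n _ n] add_mult_distrib_mat[of _ n n _ _ n]
        mult_smult_distrib[of _ n n _ n] mult_smult_assoc_mat[of _ n n _ n] assoc)
  hence "psd_sqrt (S * convex_comb e \<tau> \<rho> * S) = complex_of_real (sqrt (1 - e)) \<cdot>\<^sub>m \<rho>"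
    using psd_sqrt_smult_square[OF \<rho>_psd, of "1 - e"] e by (simp add: S(2))
  moreover have "tr (complex_of_real (sqrt (1 - e)) \<cdot>\<^sub>m \<rho>) = complex_of_real (sqrt (1 - e))"
    using tr_smult[OF \<rho>c] tr_\<rho> by simp
  ultimately show ?thesis using e by (simp add: fid1_def S_def)
qed

lemma fidA_convex_comb_orthogonal:
  assumes \<rho>: "density n \<rho>" and \<tau>: "psd n \<tau>" and \<tau>\<rho>: "\<tau> * \<rho> = 0\<^sub>m n n" and e: "0 \<le> e" "e \<le> 1"
  shows "fidA \<rho> (convex_comb e \<tau> \<rho>) = 1 - e"
proof -
  have \<rho>_psd: "psd n \<rho>" and tr_\<rho>: "tr \<rho> = 1" using \<rho> by (auto simp: density_def)
  define S T where "S = psd_sqrt \<rho>" and "T = psd_sqrt \<tau>"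
  have S: "psd n S" "S * S = \<rho>" and T: "psd n T"
    using psd_sqrt[OF \<rho>_psd] psd_sqrt[OF \<tau>] by (simp_all add: S_def T_def)
  have Sc: "S \<in> carrier_mat n n" and Tc: "T \<in> carrier_mat n n" and \<rho>c: "\<rho> \<in> carrier_mat n n"
    using S(1) T \<rho>_psd psd_carrier_mat by auto
  have ST: "S * T = 0\<^sub>m n n"
    unfolding S_def T_def by (rule psd_sqrt_mult_psd_sqrt_eq_zero[OF \<rho>_psd \<tau> psd_mult_eq_zero_commute[OF \<tau> \<rho>_psd \<tau>\<rho>]])
  have "S * psd_sqrt (convex_comb e \<tau> \<rho>) =
      S * (complex_of_real (sqrt e) \<cdot>\<^sub>m T + complex_of_real (sqrt (1 - e)) \<cdot>\<^sub>m S)"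
    using psd_sqrt_convex_comb[OF \<tau> \<rho>_psd \<tau>\<rho> e] by (simp add: S_def T_def)
  also have "\<dots> = complex_of_real (sqrt (1 - e)) \<cdot>\<^sub>m \<rho>"
    using Sc Tc ST \<rho>c by (simp add: mult_add_distrib_mat[of _ n n _ n] mult_smult_distrib[of _ n n _ n] S(2))
  finally have "S * psd_sqrt (convex_comb e \<tau> \<rho>) = complex_of_real (sqrt (1 - e)) \<cdot>\<^sub>m \<rho>" .
  moreover have "tr (complex_of_real (sqrt (1 - e)) \<cdot>\<^sub>m \<rho>) = complex_of_real (sqrt (1 - e))"
    using tr_smult[OF \<rho>c] tr_\<rho> by simp
  ultimately show ?thesis using e by (simp add: fidA_def S_def)
qed

text \<open>This also holds at \<open>x = 0\<close>, since \<open>0 powr s = 0\<close> even for \<open>s = 0\<close>; it matches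
  the convention that \<^const>\<open>mat_powr\<close> vanishes off the support.\<close>
lemma powr_eq_mult_powr_minus_one: "0 \<le> (x::real) \<Longrightarrow> x powr s = x * x powr (s - 1)"
  by (cases "x = 0") (auto simp: powr_mult_base)

lemma mult_scaled_powr_cancel:
  assumes "0 \<le> (x::real)" "0 \<le> c"
  shows "x * (c * x) powr (1 - s) * x powr (s - 1) = c powr (1 - s) * x"
proof (cases "x = 0")
  case False
  hence "0 < x" using assms(1) by simp
  thus ?thesis using assms(2) by (simp add: powr_mult powr_diff field_simps)
qed simp

text \<open>\<open>\<rho> U = U D\<close>, and the columns of \<open>U D\<close> span the support of \<open>\<rho>\<close>, on which
  \<open>\<epsilon> \<tau> + (1 - \<epsilon>) \<rho>\<close> acts as \<open>(1 - \<epsilon>) \<rho>\<close>.\<close>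
lemma convex_comb_mult_eigenbasis:
  assumes U: "unitary n U" and \<rho>_eq: "\<rho> = spectral_mat n U l"
    and \<tau>: "\<tau> \<in> carrier_mat n n" and \<tau>\<rho>: "\<tau> * \<rho> = 0\<^sub>m n n"
  shows "convex_comb e \<tau> \<rho> * (U * rdiag n l) = (U * rdiag n l) * rdiag n (\<lambda>i. (1 - e) * l i)"
proof -
  note assoc = assoc_mult_mat[of _ n n _ n _ n]
  have Uc: "U \<in> carrier_mat n n" using unitary_carrier_mat[OF U] .
  have \<rho>c: "\<rho> \<in> carrier_mat n n" using Uc by (simp add: \<rho>_eq)
  have \<rho>U: "\<rho> * U = U * rdiag n l"
    using Uc unitary_adj_mult[OF U] by (simp add: \<rho>_eq assoc)
  have "convex_comb e \<tau> \<rho> * \<rho> = complex_of_real (1 - e) \<cdot>\<^sub>m (\<rho> * \<rho>)"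
    using \<rho>c \<tau> \<tau>\<rho> by (simp add: add_mult_distrib_mat[of _ n n _ _ n] mult_smult_assoc_mat[of _ n n _ n])
  hence "convex_comb e \<tau> \<rho> * (U * rdiag n l) = complex_of_real (1 - e) \<cdot>\<^sub>m (\<rho> * (\<rho> * U))"
    unfolding \<rho>U[symmetric] using \<rho>c \<tau> Uc by (simp add: mult_smult_assoc_mat[of _ n n _ n] flip: assoc)
  also have "\<rho> * (\<rho> * U) = (U * rdiag n l) * rdiag n l"
    using \<rho>c Uc by (simp add: \<rho>U flip: assoc)
  also have "complex_of_real (1 - e) \<cdot>\<^sub>m ((U * rdiag n l) * rdiag n l) = (U * rdiag n l) * rdiag n (\<lambda>i. (1 - e) * l i)"
    using Uc by (simp add: mult_smult_distrib[of _ n n _ n] flip: smult_rdiag)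
  finally show ?thesis .
qed

lemma mat_powr_convex_comb_mult:
  assumes \<rho>: "psd n \<rho>" and \<tau>: "psd n \<tau>" and \<tau>\<rho>: "\<tau> * \<rho> = 0\<^sub>m n n" and e: "0 \<le> e" "e \<le> 1"
  shows "mat_powr (convex_comb e \<tau> \<rho>) (1 - s) * mat_powr \<rho> s =
    complex_of_real ((1 - e) powr (1 - s)) \<cdot>\<^sub>m \<rho>"
proof -
  note assoc = assoc_mult_mat[of _ n n _ n _ n]
  obtain U l where U: "unitary n U" and \<rho>_eq: "\<rho> = spectral_mat n U l" and l: "\<forall>i<n. 0 \<le> l i"
    using psd_spectral_decomposition[OF \<rho>] by (elim exE conjE)
  obtain V m where V: "unitary n V" and \<sigma>_eq: "convex_comb e \<tau> \<rho> = spectral_mat n V m"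
    using psd_spectral_decomposition[OF psd_convex_comb[OF \<tau> \<rho> e]] by (elim exE conjE)
  have Uc: "U \<in> carrier_mat n n" using unitary_carrier_mat[OF U] .
  have Wc: "U * rdiag n l \<in> carrier_mat n n" using Uc by simp
  have \<sigma>W: "spectral_mat n V m * (U * rdiag n l) = (U * rdiag n l) * rdiag n (\<lambda>i. (1 - e) * l i)"
    unfolding \<sigma>_eq[symmetric] by (rule convex_comb_mult_eigenbasis[OF U \<rho>_eq psd_carrier_mat[OF \<tau>] \<tau>\<rho>])
  have "rdiag n (\<lambda>i. l i powr s) = rdiag n l * rdiag n (\<lambda>i. l i powr (s - 1))"
    unfolding rdiag_mult_rdiag by (intro rdiag_cong powr_eq_mult_powr_minus_one) (use l in auto)
  hence "mat_powr (convex_comb e \<tau> \<rho>) (1 - s) * mat_powr \<rho> s =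
      spectral_mat n V (\<lambda>i. m i powr (1 - s)) * (U * rdiag n l) * rdiag n (\<lambda>i. l i powr (s - 1)) * adj U"
    unfolding \<sigma>_eq mat_powr_spectral_mat[OF V] unfolding \<rho>_eq mat_powr_spectral_mat[OF U]
    using Uc unitary_carrier_mat[OF V] by (simp add: assoc)
  also have "\<dots> = spectral_mat n U (\<lambda>i. l i * ((1 - e) * l i) powr (1 - s) * l i powr (s - 1))"
    using spectral_mat_intertwine_fun[OF V Wc \<sigma>W, of "\<lambda>x. x powr (1 - s)"] Uc
    by (simp add: assoc rdiag_mult_rdiag)
  also have "rdiag n (\<lambda>i. l i * ((1 - e) * l i) powr (1 - s) * l i powr (s - 1)) =
      complex_of_real ((1 - e) powr (1 - s)) \<cdot>\<^sub>m rdiag n l"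
    unfolding smult_rdiag by (intro rdiag_cong mult_scaled_powr_cancel) (use l e in auto)
  finally show ?thesis
    using Uc by (simp add: \<rho>_eq mult_smult_distrib[of _ n n _ n] mult_smult_assoc_mat[of _ n n _ n])
qed

lemma Inf_powr_one_minus:
  assumes "0 \<le> x" "x \<le> (1::real)"
  shows "Inf ((\<lambda>s. x powr (1 - s)) ` {0..1}) = x"
proof (rule cInf_eq_minimum)
  show "x \<in> (\<lambda>s. x powr (1 - s)) ` {0..1}"
    using assms by (intro image_eqI[of _ _ 0]) auto
next
  fix y assume "y \<in> (\<lambda>s. x powr (1 - s)) ` {0..1}"
  then obtain s where s: "s \<in> {0..1}" and y: "y = x powr (1 - s)" by auto
  have "x powr 1 \<le> x powr (1 - s)" using s assms by (intro powr_mono') auto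
  thus "x \<le> y" using y assms by simp
qed

lemma fidQ_convex_comb_orthogonal:
  assumes \<rho>: "density n \<rho>" and \<tau>: "psd n \<tau>" and \<tau>\<rho>: "\<tau> * \<rho> = 0\<^sub>m n n" and e: "0 \<le> e" "e \<le> 1"
  shows "fidQ \<rho> (convex_comb e \<tau> \<rho>) = 1 - e"
proof -
  have \<rho>_psd: "psd n \<rho>" and tr_\<rho>: "tr \<rho> = 1" using \<rho> by (auto simp: density_def)
  have \<rho>c: "\<rho> \<in> carrier_mat n n" using \<rho>_psd psd_carrier_mat by auto
  have "Re (tr (mat_powr \<rho> s * mat_powr (convex_comb e \<tau> \<rho>) (1 - s))) = (1 - e) powr (1 - s)" for s
  proof -
    obtain U l where U: "unitary n U" and "\<rho> = spectral_mat n U l"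
      using psd_spectral_decomposition[OF \<rho>_psd] by (elim exE conjE)
    hence Pc: "mat_powr \<rho> s \<in> carrier_mat n n"
      using unitary_carrier_mat[OF U] by (simp add: mat_powr_spectral_mat[OF U])
    obtain V m where V: "unitary n V" and "convex_comb e \<tau> \<rho> = spectral_mat n V m"
      using psd_spectral_decomposition[OF psd_convex_comb[OF \<tau> \<rho>_psd e]] by (elim exE conjE)
    hence Qc: "mat_powr (convex_comb e \<tau> \<rho>) (1 - s) \<in> carrier_mat n n"
      using unitary_carrier_mat[OF V] by (simp add: mat_powr_spectral_mat[OF V])
    show ?thesis
      using tr_mult_commute[OF Pc Qc] mat_powr_convex_comb_mult[OF \<rho>_psd \<tau> \<tau>\<rho> e, of s]
        tr_smult[OF \<rho>c] tr_\<rho> by simp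
  qed
  thus ?thesis using Inf_powr_one_minus[of "1 - e"] e by (simp add: fidQ_def)
qed

section \<open>Mixtures of orthogonal states\<close>

lemma wsum_carrier_mat[simp]: "wsum d p A J \<in> carrier_mat d d"
  by (simp add: wsum_def)

lemma wsum_empty: "wsum d p A {} = 0\<^sub>m d d"
  by (rule eq_matI) (auto simp: wsum_def)

lemma wsum_insert:
  assumes "finite J" "j \<notin> J" "A j \<in> carrier_mat d d"
  shows "wsum d p A (insert j J) = complex_of_real (p j) \<cdot>\<^sub>m A j + wsum d p A J"
  by (rule eq_matI) (use assms in \<open>auto simp: wsum_def\<close>)

lemma psd_wsum:
  assumes "finite J" and "\<forall>j\<in>J. psd d (A j) \<and> 0 \<le> p j"
  shows "psd d (wsum d p A J)"
  using assms
proof (induction J rule: finite_induct)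
  case empty thus ?case by (simp add: wsum_empty psd_zero)
next
  case (insert j J)
  thus ?case by (simp add: wsum_insert psd_carrier_mat psd_add psd_smult)
qed

lemma mult_wsum_eq_zero:
  assumes "finite J" and M: "M \<in> carrier_mat d d"
    and "\<forall>j\<in>J. A j \<in> carrier_mat d d \<and> M * A j = 0\<^sub>m d d"
  shows "M * wsum d p A J = 0\<^sub>m d d"
  using assms(1,3)
proof (induction J rule: finite_induct)
  case empty thus ?case using M by (simp add: wsum_empty)
next
  case (insert j J)
  thus ?case using M by (simp add: wsum_insert mult_add_distrib_mat[of _ d d _ d] mult_smult_distrib[of _ d d _ d])
qed

lemma tr_wsum:
  assumes "finite J" and "\<forall>j\<in>J. A j \<in> carrier_mat d d"
  shows "tr (wsum d p A J) = (\<Sum>j\<in>J. complex_of_real (p j) * tr (A j))"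
  using assms
proof (induction J rule: finite_induct)
  case empty thus ?case by (simp add: wsum_empty tr_def)
next
  case (insert j J)
  thus ?case by (simp add: wsum_insert tr_add[of _ d] tr_smult[of _ d])
qed

lemma density_wsum:
  assumes "finite J" and "\<forall>j\<in>J. density d (A j) \<and> 0 \<le> p j" and "(\<Sum>j\<in>J. p j) = 1"
  shows "density d (wsum d p A J)"
proof -
  have "tr (wsum d p A J) = (\<Sum>j\<in>J. complex_of_real (p j))"
    using assms(1,2) tr_wsum[OF assms(1)] by (simp add: density_def psd_carrier_mat)
  also have "\<dots> = 1" using assms(3) by (simp flip: of_real_sum)
  finally show ?thesis using assms psd_wsum[OF assms(1)] by (simp add: density_def)
qed

lemma wsum_convex_comb:
  assumes p: "(\<Sum>j\<in>J. p j) = 1" and B: "B \<in> carrier_mat d d" and A: "\<forall>j\<in>J. A j \<in> carrier_mat d d"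
  shows "wsum d p (\<lambda>j. convex_comb e B (A j)) J = convex_comb e B (wsum d p A J)"
proof (rule eq_matI)
  fix i k assume "i < dim_row (convex_comb e B (wsum d p A J))" "k < dim_col (convex_comb e B (wsum d p A J))"
  hence i: "i < d" and k: "k < d" using B by (auto simp: wsum_def)
  have "wsum d p (\<lambda>j. convex_comb e B (A j)) J $$ (i,k) =
      (\<Sum>j\<in>J. complex_of_real (p j) * (complex_of_real e * B $$ (i,k) + complex_of_real (1 - e) * A j $$ (i,k)))"
    unfolding wsum_def using i k A B by (auto intro!: sum.cong simp del: of_real_diff)
  also have "\<dots> = (\<Sum>j\<in>J. complex_of_real (p j)) * (complex_of_real e * B $$ (i,k))
      + complex_of_real (1 - e) * (\<Sum>j\<in>J. complex_of_real (p j) * A j $$ (i,k))"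
    by (simp add: distrib_left sum.distrib sum_distrib_left sum_distrib_right mult_ac del: of_real_diff)
  also have "(\<Sum>j\<in>J. complex_of_real (p j)) = 1" using p by (simp flip: of_real_sum)
  finally show "wsum d p (\<lambda>j. convex_comb e B (A j)) J $$ (i,k) = convex_comb e B (wsum d p A J) $$ (i,k)"
    using i k B by (simp add: wsum_def)
qed (use B in \<open>auto simp: wsum_def\<close>)

lemma fidelity_orthogonal_mixture:
  fixes F :: "complex mat \<Rightarrow> complex mat \<Rightarrow> real"
  assumes F: "\<And>\<rho> \<tau>. density d \<rho> \<Longrightarrow> psd d \<tau> \<Longrightarrow> \<tau> * \<rho> = 0\<^sub>m d d \<Longrightarrow> F \<rho> (convex_comb eps \<tau> \<rho>) = 1 - eps"
    and dens: "\<forall>j \<in> {0..n}. density d (rho j)"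
    and orth: "\<forall>j \<in> {0..n}. \<forall>k \<in> {0..n}. j \<noteq> k \<longrightarrow> rho j * rho k = 0\<^sub>m d d"
    and p_nonneg: "\<forall>j \<in> {1..n}. 0 \<le> p j"
    and p_sum: "(\<Sum>j = 1..n. p j) = 1"
  shows "(\<Sum>j = 1..n. p j * F (rho j) (convex_comb eps (rho 0) (rho j))) =
      F (wsum d p rho {1..n}) (wsum d p (\<lambda>j. convex_comb eps (rho 0) (rho j)) {1..n}) \<and>
    F (wsum d p rho {1..n}) (wsum d p (\<lambda>j. convex_comb eps (rho 0) (rho j)) {1..n}) = 1 - eps"
proof -
  have \<rho>0: "psd d (rho 0)" using dens by (auto simp: density_def)
  have \<rho>j: "density d (rho j)" "rho j \<in> carrier_mat d d" "rho 0 * rho j = 0\<^sub>m d d" if "j \<in> {1..n}" for j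
    using dens orth that by (auto simp: density_def psd_carrier_mat)
  have mixture: "F (wsum d p rho {1..n}) (convex_comb eps (rho 0) (wsum d p rho {1..n})) = 1 - eps"
  proof (rule F[OF _ \<rho>0])
    show "density d (wsum d p rho {1..n})" using \<rho>j p_nonneg p_sum by (intro density_wsum) auto
    show "rho 0 * wsum d p rho {1..n} = 0\<^sub>m d d"
      using \<rho>j psd_carrier_mat[OF \<rho>0] by (intro mult_wsum_eq_zero) auto
  qed
  have "(\<Sum>j = 1..n. p j * F (rho j) (convex_comb eps (rho 0) (rho j))) = (\<Sum>j = 1..n. p j * (1 - eps))"
    using F[OF \<rho>j(1) \<rho>0 \<rho>j(3)] by simp
  also have "\<dots> = 1 - eps" using p_sum by (simp flip: sum_distrib_right)
  finally show ?thesis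
    using mixture wsum_convex_comb[OF p_sum psd_carrier_mat[OF \<rho>0]] \<rho>j(2) by simp
qed

theorem mainTheorem9:
  fixes d n :: nat and rho :: "nat \<Rightarrow> complex mat" and p :: "nat \<Rightarrow> real" and eps :: real
  assumes dens: "\<forall>j \<in> {0..n}. density d (rho j)"
    and orth: "\<forall>j \<in> {0..n}. \<forall>k \<in> {0..n}. j \<noteq> k \<longrightarrow> rho j * rho k = 0\<^sub>m d d"
    and p_nonneg: "\<forall>j \<in> {1..n}. 0 \<le> p j"
    and p_sum: "(\<Sum>j = 1..n. p j) = 1"
    and eps: "0 \<le> eps" "eps \<le> 1"
  shows "let sig = (\<lambda>j. complex_of_real eps \<cdot>\<^sub>m rho 0 + complex_of_real (1 - eps) \<cdot>\<^sub>m rho j);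
             r = wsum d p rho {1..n};
             s = wsum d p sig {1..n}
         in \<forall>F \<in> {fid1, fidQ, fidA}.
              (\<Sum>j = 1..n. p j * F (rho j) (sig j)) = F r s \<and> F r s = 1 - eps"
  unfolding Let_def
  using fidelity_orthogonal_mixture[where F = fid1, OF fid1_convex_comb_orthogonal[OF _ _ _ eps] dens orth p_nonneg p_sum]
    fidelity_orthogonal_mixture[where F = fidQ, OF fidQ_convex_comb_orthogonal[OF _ _ _ eps] dens orth p_nonneg p_sum]
    fidelity_orthogonal_mixture[where F = fidA, OF fidA_convex_comb_orthogonal[OF _ _ _ eps] dens orth p_nonneg p_sum]
  by auto

end
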